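(* Let $C\in\mathscr{C}$ and let $k_C\colon K_C\to C$ be obtained as follows: choose a distinguished triangle $S[-1]\to C\overset{a}{\to}T\to S$ with $S\in\mathcal{S},T\in\mathcal{T}$; choose a distinguished triangle $U\to T\overset{b}{\to}V[1]\to U[1]$ with $U\in\mathcal{U},V\in\mathcal{V}$; and choose a distinguished triangle $V\to K_C\overset{k_C}{\to}C\overset{b\circ a}{\to}V[1]$. Then for every $X\in\mathscr{C}^-$, the map \[ \underline{k}_C\circ-\colon\underline{\mathscr{C}}^-(X,K_C)\to\underline{\mathscr{C}}(X,C) \] is bijective.
   Context: $\mathscr{C}$ is a triangulated category with shift $[1]$; subcategories are full, additive, closed under isomorphisms and direct summands. $\mathrm{Ext}^1(X,Y)=\mathscr{C}(X,Y[1])$. $\mathcal{M}\ast\mathcal{N}$ is the full subcategory of objects $C$ admitting a distinguished triangle $M\to C\to N\to M[1]$ with $M\in\mathcal{M}$, $N\in\mathcal{N}$. A cotorsion pair $(\mathcal{U},\mathcal{V})$: $\mathrm{Ext}^1(\mathcal{U},\mathcal{V})=0$ and $\mathscr{C}=\mathcal{U}\ast\mathcal{V}[1]$. Fix a twin cotorsion pair, i.e. cotorsion pairs $(\mathcal{S},\mathcal{T}),(\mathcal{U},\mathcal{V})$ with $\mathrm{Ext}^1(\mathcal{S},\mathcal{V})=0$. Put $\mathcal{W}=\mathcal{T}\cap\mathcal{U}$, $\mathscr{C}^-=\mathcal{S}[-1]\ast\mathcal{W}$. $\underline{\mathscr{C}}$ and $\underline{\mathscr{C}}^-$ denote the ideal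 quotients of $\mathscr{C}$ and $\mathscr{C}^-$ by morphisms factoring through objects of $\mathcal{W}$, and $\underline{f}$ is the image of a morphism $f$. (One has $K_C\in\mathscr{C}^-$.) *)

theory Defs
  imports Main
begin

text \<open>Objects are all elements of
the type 'o; morphisms are elements of 'm, with hom-sets Hom X Y.  The shift [1]
is given on objects by shO (assumed bijective, so [-1] is its inverse) and on
morphisms by shM.  dist X Y Z f g h means X -f-> Y -g-> Z -h-> X[1] is distinguished.\<close>

record ('o, 'm) tricat =
  Hom   :: "'o \<Rightarrow> 'o \<Rightarrow> 'm set"
  cmp   :: "'m \<Rightarrow> 'm \<Rightarrow> 'm"   (* cmp g f = g o f *)
  idm   :: "'o \<Rightarrow> 'm"
  addm  :: "'m \<Rightarrow> 'm \<Rightarrow> 'm"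
  negm  :: "'m \<Rightarrow> 'm"
  zerom :: "'o \<Rightarrow> 'o \<Rightarrow> 'm"
  shO   :: "'o \<Rightarrow> 'o"
  shM   :: "'m \<Rightarrow> 'm"
  dist  :: "'o \<Rightarrow> 'o \<Rightarrow> 'o \<Rightarrow> 'm \<Rightarrow> 'm \<Rightarrow> 'm \<Rightarrow> bool"

definition category_axioms :: "('o, 'm, 'x) tricat_scheme \<Rightarrow> bool" where
  "category_axioms C \<longleftrightarrow>
     (\<forall>X Y Z f g. f \<in> Hom C X Y \<longrightarrow> g \<in> Hom C Y Z \<longrightarrow> cmp C g f \<in> Hom C X Z) \<and>
     (\<forall>X. idm C X \<in> Hom C X X) \<and>
     (\<forall>X Y f. f \<in> Hom C X Y \<longrightarrow> cmp C f (idm C X) = f \<and> cmp C (idm C Y) f = f) \<and>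
     (\<forall>W X Y Z f g h. f \<in> Hom C W X \<longrightarrow> g \<in> Hom C X Y \<longrightarrow> h \<in> Hom C Y Z \<longrightarrow>
        cmp C h (cmp C g f) = cmp C (cmp C h g) f)"

definition preadditive :: "('o, 'm, 'x) tricat_scheme \<Rightarrow> bool" where
  "preadditive C \<longleftrightarrow> category_axioms C \<and>
     (\<forall>X Y. zerom C X Y \<in> Hom C X Y \<and>
        (\<forall>f \<in> Hom C X Y. \<forall>g \<in> Hom C X Y. addm C f g \<in> Hom C X Y) \<and>
        (\<forall>f \<in> Hom C X Y. negm C f \<in> Hom C X Y) \<and>
        (\<forall>f \<in> Hom C X Y. \<forall>g \<in> Hom C X Y. \<forall>h \<in> Hom C X Y.
            addm C (addm C f g) h = addm C f (addm C g h)) \<and>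
        (\<forall>f \<in> Hom C X Y. \<forall>g \<in> Hom C X Y. addm C f g = addm C g f) \<and>
        (\<forall>f \<in> Hom C X Y. addm C (zerom C X Y) f = f) \<and>
        (\<forall>f \<in> Hom C X Y. addm C (negm C f) f = zerom C X Y)) \<and>
     (\<forall>X Y Z f g g'. f \<in> Hom C X Y \<longrightarrow> g \<in> Hom C Y Z \<longrightarrow> g' \<in> Hom C Y Z \<longrightarrow>
        cmp C (addm C g g') f = addm C (cmp C g f) (cmp C g' f)) \<and>
     (\<forall>X Y Z f f' g. f \<in> Hom C X Y \<longrightarrow> f' \<in> Hom C X Y \<longrightarrow> g \<in> Hom C Y Z \<longrightarrow>
        cmp C g (addm C f f') = addm C (cmp C g f) (cmp C g f'))"

definition zero_obj :: "('o, 'm, 'x) tricat_scheme \<Rightarrow> 'o \<Rightarrow> bool" where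
  "zero_obj C Z \<longleftrightarrow> (\<forall>X. Hom C Z X = {zerom C Z X} \<and> Hom C X Z = {zerom C X Z})"

definition biprod :: "('o, 'm, 'x) tricat_scheme \<Rightarrow> 'o \<Rightarrow> 'o \<Rightarrow> 'o \<Rightarrow> 'm \<Rightarrow> 'm \<Rightarrow> 'm \<Rightarrow> 'm \<Rightarrow> bool" where
  "biprod C X1 X2 Y i1 i2 p1 p2 \<longleftrightarrow>
     i1 \<in> Hom C X1 Y \<and> i2 \<in> Hom C X2 Y \<and> p1 \<in> Hom C Y X1 \<and> p2 \<in> Hom C Y X2 \<and>
     cmp C p1 i1 = idm C X1 \<and> cmp C p2 i2 = idm C X2 \<and>
     cmp C p1 i2 = zerom C X2 X1 \<and> cmp C p2 i1 = zerom C X1 X2 \<and>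
     addm C (cmp C i1 p1) (cmp C i2 p2) = idm C Y"

definition additive :: "('o, 'm, 'x) tricat_scheme \<Rightarrow> bool" where
  "additive C \<longleftrightarrow> preadditive C \<and> (\<exists>Z. zero_obj C Z) \<and>
     (\<forall>X1 X2. \<exists>Y i1 i2 p1 p2. biprod C X1 X2 Y i1 i2 p1 p2)"

definition iso :: "('o, 'm, 'x) tricat_scheme \<Rightarrow> 'm \<Rightarrow> 'o \<Rightarrow> 'o \<Rightarrow> bool" where
  "iso C f X Y \<longleftrightarrow> f \<in> Hom C X Y \<and>
     (\<exists>g \<in> Hom C Y X. cmp C g f = idm C X \<and> cmp C f g = idm C Y)"

definition shift_axioms :: "('o, 'm, 'x) tricat_scheme \<Rightarrow> bool" where
  "shift_axioms C \<longleftrightarrow> bij (shO C) \<and>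
     (\<forall>X Y. bij_betw (shM C) (Hom C X Y) (Hom C (shO C X) (shO C Y))) \<and>
     (\<forall>X Y Z f g. f \<in> Hom C X Y \<longrightarrow> g \<in> Hom C Y Z \<longrightarrow>
        shM C (cmp C g f) = cmp C (shM C g) (shM C f)) \<and>
     (\<forall>X. shM C (idm C X) = idm C (shO C X)) \<and>
     (\<forall>X Y f g. f \<in> Hom C X Y \<longrightarrow> g \<in> Hom C X Y \<longrightarrow>
        shM C (addm C f g) = addm C (shM C f) (shM C g))"

definition triangle_axioms :: "('o, 'm, 'x) tricat_scheme \<Rightarrow> bool" where
  "triangle_axioms C \<longleftrightarrow>
     (\<forall>X Y Z f g h. dist C X Y Z f g h \<longrightarrow>
        f \<in> Hom C X Y \<and> g \<in> Hom C Y Z \<and> h \<in> Hom C Z (shO C X)) \<and>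
     \<comment> \<open>TR1: closure under isomorphisms of triangles\<close>
     (\<forall>X Y Z f g h X' Y' Z' f' g' h' u v w.
        dist C X Y Z f g h \<longrightarrow>
        f' \<in> Hom C X' Y' \<longrightarrow> g' \<in> Hom C Y' Z' \<longrightarrow> h' \<in> Hom C Z' (shO C X') \<longrightarrow>
        iso C u X X' \<longrightarrow> iso C v Y Y' \<longrightarrow> iso C w Z Z' \<longrightarrow>
        cmp C f' u = cmp C v f \<longrightarrow> cmp C g' v = cmp C w g \<longrightarrow>
        cmp C h' w = cmp C (shM C u) h \<longrightarrow>
        dist C X' Y' Z' f' g' h') \<and>
     \<comment> \<open>TR1: trivial triangles\<close>
     (\<forall>X. \<exists>Z. zero_obj C Z \<and> dist C X X Z (idm C X) (zerom C X Z) (zerom C Z (shO C X))) \<and>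
     \<comment> \<open>TR1: every morphism has a cone\<close>
     (\<forall>X Y f. f \<in> Hom C X Y \<longrightarrow> (\<exists>Z g h. dist C X Y Z f g h)) \<and>
     \<comment> \<open>TR2: rotation\<close>
     (\<forall>X Y Z f g h. dist C X Y Z f g h \<longleftrightarrow>
        dist C Y Z (shO C X) g h (negm C (shM C f))) \<and>
     \<comment> \<open>TR3: morphism completion\<close>
     (\<forall>X Y Z f g h X' Y' Z' f' g' h' u v.
        dist C X Y Z f g h \<longrightarrow> dist C X' Y' Z' f' g' h' \<longrightarrow>
        u \<in> Hom C X X' \<longrightarrow> v \<in> Hom C Y Y' \<longrightarrow> cmp C f' u = cmp C v f \<longrightarrow>
        (\<exists>w \<in> Hom C Z Z'. cmp C g' v = cmp C w g \<and> cmp C h' w = cmp C (shM C u) h)) \<and>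
     \<comment> \<open>TR4: octahedral axiom\<close>
     (\<forall>X Y Z Z' X' Y' f g h j k l m n.
        f \<in> Hom C X Y \<longrightarrow> g \<in> Hom C Y Z \<longrightarrow>
        dist C X Y Z' f h j \<longrightarrow> dist C Y Z X' g k l \<longrightarrow> dist C X Z Y' (cmp C g f) m n \<longrightarrow>
        (\<exists>a \<in> Hom C Z' Y'. \<exists>b \<in> Hom C Y' X'.
           dist C Z' Y' X' a b (cmp C (shM C h) l) \<and>
           cmp C a h = cmp C m g \<and> cmp C n a = j \<and>
           cmp C b m = k \<and> cmp C l b = cmp C (shM C f) n))"

definition triangulated :: "('o, 'm, 'x) tricat_scheme \<Rightarrow> bool" where
  "triangulated C \<longleftrightarrow> additive C \<and> shift_axioms C \<and> triangle_axioms C"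

definition shO_inv :: "('o, 'm, 'x) tricat_scheme \<Rightarrow> 'o \<Rightarrow> 'o" where
  "shO_inv C = inv (shO C)"

definition subcat :: "('o, 'm, 'x) tricat_scheme \<Rightarrow> 'o set \<Rightarrow> bool" where
  "subcat C D \<longleftrightarrow>
     (\<forall>X Y f. X \<in> D \<longrightarrow> iso C f X Y \<longrightarrow> Y \<in> D) \<and>
     (\<exists>Z. zero_obj C Z \<and> Z \<in> D) \<and>
     (\<forall>X1 X2 Y i1 i2 p1 p2. biprod C X1 X2 Y i1 i2 p1 p2 \<longrightarrow> X1 \<in> D \<longrightarrow> X2 \<in> D \<longrightarrow> Y \<in> D) \<and>
     (\<forall>X1 X2 Y i1 i2 p1 p2. biprod C X1 X2 Y i1 i2 p1 p2 \<longrightarrow> Y \<in> D \<longrightarrow> X1 \<in> D)"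

definition star :: "('o, 'm, 'x) tricat_scheme \<Rightarrow> 'o set \<Rightarrow> 'o set \<Rightarrow> 'o set" where
  "star C M N = {X. \<exists>A B f g h. A \<in> M \<and> B \<in> N \<and> dist C A X B f g h}"

definition ext1_vanish :: "('o, 'm, 'x) tricat_scheme \<Rightarrow> 'o set \<Rightarrow> 'o set \<Rightarrow> bool" where
  "ext1_vanish C A B \<longleftrightarrow> (\<forall>X \<in> A. \<forall>Y \<in> B. Hom C X (shO C Y) = {zerom C X (shO C Y)})"

definition cotorsion_pair :: "('o, 'm, 'x) tricat_scheme \<Rightarrow> 'o set \<Rightarrow> 'o set \<Rightarrow> bool" where
  "cotorsion_pair C U V \<longleftrightarrow> subcat C U \<and> subcat C V \<and> ext1_vanish C U V \<and>
     star C U (shO C ` V) = UNIV"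

definition twin_cotorsion_pair ::
  "('o, 'm, 'x) tricat_scheme \<Rightarrow> 'o set \<Rightarrow> 'o set \<Rightarrow> 'o set \<Rightarrow> 'o set \<Rightarrow> bool" where
  "twin_cotorsion_pair C S T U V \<longleftrightarrow>
     cotorsion_pair C S T \<and> cotorsion_pair C U V \<and> ext1_vanish C S V"

definition Cminus :: "('o, 'm, 'x) tricat_scheme \<Rightarrow> 'o set \<Rightarrow> 'o set \<Rightarrow> 'o set \<Rightarrow> 'o set" where
  "Cminus C S T U = star C (shO_inv C ` S) (T \<inter> U)"

definition factors_through :: "('o, 'm, 'x) tricat_scheme \<Rightarrow> 'o set \<Rightarrow> 'o \<Rightarrow> 'o \<Rightarrow> 'm \<Rightarrow> bool" where
  "factors_through C W X Y f \<longleftrightarrow>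
     (\<exists>Z \<in> W. \<exists>u \<in> Hom C X Z. \<exists>v \<in> Hom C Z Y. f = cmp C v u)"

definition stable_rel :: "('o, 'm, 'x) tricat_scheme \<Rightarrow> 'o set \<Rightarrow> 'o \<Rightarrow> 'o \<Rightarrow> ('m \<times> 'm) set" where
  "stable_rel C W X Y = {(f, g). f \<in> Hom C X Y \<and> g \<in> Hom C X Y \<and>
                                 factors_through C W X Y (addm C f (negm C g))}"

definition quot_hom :: "('o, 'm, 'x) tricat_scheme \<Rightarrow> 'o set \<Rightarrow> 'o \<Rightarrow> 'o \<Rightarrow> 'm set set" where
  "quot_hom C W X Y = Hom C X Y // stable_rel C W X Y"

definition postcomp_class ::
  "('o, 'm, 'x) tricat_scheme \<Rightarrow> 'o set \<Rightarrow> 'o \<Rightarrow> 'o \<Rightarrow> 'm \<Rightarrow> 'm set \<Rightarrow> 'm set" where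
  "postcomp_class C W X Y k cl = stable_rel C W X Y `` (cmp C k ` cl)"

end

theory Submission
  imports Defs
begin

text \<open>Write \<open>X \<in> \<C>\<^sup>-\<close> as an extension \<open>A \<rightarrow> X \<rightarrow> B \<rightarrow> A[1]\<close> with \<open>A[1] \<in> \<S>\<close> and
  \<open>B \<in> \<W>\<close>; recall that \<open>k\<^sub>C\<close> is a weak kernel of \<open>b \<circ> a\<close> and that \<open>i\<close> is a weak kernel
  of \<open>k\<^sub>C\<close>.  Surjectivity: for \<open>h : X \<rightarrow> C\<close>, \<open>a h\<close> vanishes on \<open>A\<close> because
  \<open>Ext\<^sup>1(\<S>, \<T>) = 0\<close>, so it factors through \<open>B \<in> \<U>\<close>, where \<open>b\<close> vanishes because
  \<open>Ext\<^sup>1(\<U>, \<V>) = 0\<close>; hence \<open>b a h = 0\<close> and \<open>h\<close> lifts along \<open>k\<^sub>C\<close>.  Injectivity: if \<open>k\<^sub>C d\<close>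
  factors as \<open>v u\<close> through \<open>\<W>\<close>, then \<open>b a v = 0\<close>, so \<open>v = k\<^sub>C v'\<close> and \<open>d - v' u\<close> is
  killed by \<open>k\<^sub>C\<close>; it therefore factors through \<open>i : V \<rightarrow> K\<^sub>C\<close>, and the resulting map
  \<open>X \<rightarrow> V\<close> vanishes on \<open>A\<close> because \<open>Ext\<^sup>1(\<S>, \<V>) = 0\<close>, so it factors through \<open>B \<in> \<W>\<close>.\<close>

lemma ext1_vanish_mono: "ext1_vanish C A B \<Longrightarrow> A' \<subseteq> A \<Longrightarrow> B' \<subseteq> B \<Longrightarrow> ext1_vanish C A' B'"
  unfolding ext1_vanish_def by blast

locale preadditive_category =
  fixes C :: "('o, 'm, 'x) tricat_scheme"
  assumes preadditive: "preadditive C"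
begin

lemma is_category: "category_axioms C"
  and Hom_abelian_group: "\<And>X Y. zerom C X Y \<in> Hom C X Y \<and>
        (\<forall>f \<in> Hom C X Y. \<forall>g \<in> Hom C X Y. addm C f g \<in> Hom C X Y) \<and>
        (\<forall>f \<in> Hom C X Y. negm C f \<in> Hom C X Y) \<and>
        (\<forall>f \<in> Hom C X Y. \<forall>g \<in> Hom C X Y. \<forall>h \<in> Hom C X Y.
            addm C (addm C f g) h = addm C f (addm C g h)) \<and>
        (\<forall>f \<in> Hom C X Y. \<forall>g \<in> Hom C X Y. addm C f g = addm C g f) \<and>
        (\<forall>f \<in> Hom C X Y. addm C (zerom C X Y) f = f) \<and>
        (\<forall>f \<in> Hom C X Y. addm C (negm C f) f = zerom C X Y)"
  and cmp_addm_left: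
  "\<And>f g g'. f \<in> Hom C X Y \<Longrightarrow> g \<in> Hom C Y Z \<Longrightarrow> g' \<in> Hom C Y Z \<Longrightarrow>
   cmp C (addm C g g') f = addm C (cmp C g f) (cmp C g' f)"
  and cmp_addm_right:
  "\<And>f f' g. f \<in> Hom C X Y \<Longrightarrow> f' \<in> Hom C X Y \<Longrightarrow> g \<in> Hom C Y Z \<Longrightarrow>
   cmp C g (addm C f f') = addm C (cmp C g f) (cmp C g f')"
  using preadditive unfolding preadditive_def by (elim conjE; simp)+

lemma cmp_in_Hom: "f \<in> Hom C X Y \<Longrightarrow> g \<in> Hom C Y Z \<Longrightarrow> cmp C g f \<in> Hom C X Z"
  using is_category unfolding category_axioms_def by blast

lemma idm_in_Hom: "idm C X \<in> Hom C X X"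
  using is_category unfolding category_axioms_def by blast

lemma cmp_idm_left: "f \<in> Hom C X Y \<Longrightarrow> cmp C (idm C Y) f = f"
  using is_category unfolding category_axioms_def by blast

lemma cmp_idm_right: "f \<in> Hom C X Y \<Longrightarrow> cmp C f (idm C X) = f"
  using is_category unfolding category_axioms_def by blast

lemma cmp_assoc:
  "f \<in> Hom C W X \<Longrightarrow> g \<in> Hom C X Y \<Longrightarrow> h \<in> Hom C Y Z \<Longrightarrow>
   cmp C h (cmp C g f) = cmp C (cmp C h g) f"
  using is_category unfolding category_axioms_def by blast

lemma zerom_in_Hom: "zerom C X Y \<in> Hom C X Y"
  using Hom_abelian_group by blast

lemma addm_in_Hom: "f \<in> Hom C X Y \<Longrightarrow> g \<in> Hom C X Y \<Longrightarrow> addm C f g \<in> Hom C X Y"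
  using Hom_abelian_group by blast

lemma negm_in_Hom: "f \<in> Hom C X Y \<Longrightarrow> negm C f \<in> Hom C X Y"
  using Hom_abelian_group by blast

lemma addm_assoc:
  "f \<in> Hom C X Y \<Longrightarrow> g \<in> Hom C X Y \<Longrightarrow> h \<in> Hom C X Y \<Longrightarrow>
   addm C (addm C f g) h = addm C f (addm C g h)"
  using Hom_abelian_group by blast

lemma addm_commute: "f \<in> Hom C X Y \<Longrightarrow> g \<in> Hom C X Y \<Longrightarrow> addm C f g = addm C g f"
  using Hom_abelian_group by blast

lemma zerom_addm: "f \<in> Hom C X Y \<Longrightarrow> addm C (zerom C X Y) f = f"
  using Hom_abelian_group by blast

lemma negm_addm: "f \<in> Hom C X Y \<Longrightarrow> addm C (negm C f) f = zerom C X Y"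
  using Hom_abelian_group by blast

lemma addm_zerom: "f \<in> Hom C X Y \<Longrightarrow> addm C f (zerom C X Y) = f"
  using addm_commute[OF _ zerom_in_Hom] zerom_addm by simp

lemma addm_negm: "f \<in> Hom C X Y \<Longrightarrow> addm C f (negm C f) = zerom C X Y"
  using addm_commute[OF _ negm_in_Hom] negm_addm by simp

lemma addm_left_cancel:
  assumes "a \<in> Hom C X Y" "b \<in> Hom C X Y" "c \<in> Hom C X Y" "addm C a b = addm C a c"
  shows "b = c"
proof -
  have na: "negm C a \<in> Hom C X Y" using negm_in_Hom[OF assms(1)] .
  have "b = addm C (addm C (negm C a) a) b" using assms(2) negm_addm[OF assms(1)] zerom_addm by simp
  also have "\<dots> = addm C (negm C a) (addm C a c)" using addm_assoc[OF na assms(1,2)] assms(4) by simp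
  also have "\<dots> = c" using addm_assoc[OF na assms(1,3)] negm_addm[OF assms(1)] zerom_addm[OF assms(3)]
    by simp
  finally show ?thesis .
qed

lemma negm_unique:
  assumes "a \<in> Hom C X Y" "b \<in> Hom C X Y" "addm C a b = zerom C X Y"
  shows "b = negm C a"
  using addm_left_cancel[OF assms(1,2) negm_in_Hom[OF assms(1)]] assms(3) addm_negm[OF assms(1)]
  by simp

lemma negm_zerom: "negm C (zerom C X Y) = zerom C X Y"
  using negm_unique[OF zerom_in_Hom zerom_in_Hom] zerom_addm[OF zerom_in_Hom] by simp

lemma negm_negm: "f \<in> Hom C X Y \<Longrightarrow> negm C (negm C f) = f"
  using negm_unique[OF negm_in_Hom] negm_addm by simp

lemma cmp_zerom_right:
  assumes g: "g \<in> Hom C Y Z"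
  shows "cmp C g (zerom C X Y) = zerom C X Z"
proof -
  have gz: "cmp C g (zerom C X Y) \<in> Hom C X Z" using cmp_in_Hom[OF zerom_in_Hom g] .
  have "addm C (cmp C g (zerom C X Y)) (cmp C g (zerom C X Y)) =
        addm C (cmp C g (zerom C X Y)) (zerom C X Z)"
    using cmp_addm_right[OF zerom_in_Hom zerom_in_Hom g] zerom_addm[OF zerom_in_Hom]
      addm_zerom[OF gz] by simp
  then show ?thesis using addm_left_cancel[OF gz gz zerom_in_Hom] by simp
qed

lemma cmp_zerom_left:
  assumes f: "f \<in> Hom C X Y"
  shows "cmp C (zerom C Y Z) f = zerom C X Z"
proof -
  have zf: "cmp C (zerom C Y Z) f \<in> Hom C X Z" using cmp_in_Hom[OF f zerom_in_Hom] .
  have "addm C (cmp C (zerom C Y Z) f) (cmp C (zerom C Y Z) f) =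
        addm C (cmp C (zerom C Y Z) f) (zerom C X Z)"
    using cmp_addm_left[OF f zerom_in_Hom zerom_in_Hom] zerom_addm[OF zerom_in_Hom]
      addm_zerom[OF zf] by simp
  then show ?thesis using addm_left_cancel[OF zf zf zerom_in_Hom] by simp
qed

lemma cmp_negm_right:
  assumes "f \<in> Hom C X Y" "g \<in> Hom C Y Z"
  shows "cmp C g (negm C f) = negm C (cmp C g f)"
proof (rule negm_unique)
  show "addm C (cmp C g f) (cmp C g (negm C f)) = zerom C X Z"
    using cmp_addm_right[OF assms(1) negm_in_Hom[OF assms(1)] assms(2)] addm_negm[OF assms(1)]
      cmp_zerom_right[OF assms(2)] by simp
qed (use assms cmp_in_Hom negm_in_Hom in blast)+

lemma cmp_negm_left:
  assumes "f \<in> Hom C X Y" "g \<in> Hom C Y Z"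
  shows "cmp C (negm C g) f = negm C (cmp C g f)"
proof (rule negm_unique)
  show "addm C (cmp C g f) (cmp C (negm C g) f) = zerom C X Z"
    using cmp_addm_left[OF assms(1,2) negm_in_Hom[OF assms(2)]] addm_negm[OF assms(2)]
      cmp_zerom_left[OF assms(1)] by simp
qed (use assms cmp_in_Hom negm_in_Hom in blast)+

lemma cmp_diff_right:
  "f \<in> Hom C X Y \<Longrightarrow> f' \<in> Hom C X Y \<Longrightarrow> g \<in> Hom C Y Z \<Longrightarrow>
   cmp C g (addm C f (negm C f')) = addm C (cmp C g f) (negm C (cmp C g f'))"
  by (simp add: cmp_addm_right cmp_negm_right negm_in_Hom)

lemma diff_add_diff:
  assumes "f \<in> Hom C X Y" "g \<in> Hom C X Y" "h \<in> Hom C X Y"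
  shows "addm C (addm C f (negm C g)) (addm C g (negm C h)) = addm C f (negm C h)"
proof -
  have ng: "negm C g \<in> Hom C X Y" and nh: "negm C h \<in> Hom C X Y"
    using assms negm_in_Hom by blast+
  have "addm C (addm C f (negm C g)) (addm C g (negm C h)) =
        addm C f (addm C (addm C (negm C g) g) (negm C h))"
    using addm_assoc[OF assms(1) ng addm_in_Hom[OF assms(2) nh]] addm_assoc[OF ng assms(2) nh]
    by simp
  then show ?thesis using negm_addm[OF assms(2)] zerom_addm[OF nh] by simp
qed

lemma negm_diff:
  assumes "f \<in> Hom C X Y" "g \<in> Hom C X Y"
  shows "negm C (addm C f (negm C g)) = addm C g (negm C f)"
  using negm_unique[OF addm_in_Hom[OF assms(1) negm_in_Hom[OF assms(2)]]
      addm_in_Hom[OF assms(2) negm_in_Hom[OF assms(1)]]]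
    diff_add_diff[OF assms(1,2,1)] addm_negm[OF assms(1)]
  by simp

lemma diff_addm_cancel:
  "f \<in> Hom C X Y \<Longrightarrow> g \<in> Hom C X Y \<Longrightarrow> addm C (addm C f (negm C g)) g = f"
  by (simp add: addm_assoc negm_addm addm_zerom negm_in_Hom)

lemma iso_zerom_zero_obj:
  assumes "zero_obj C Z1" "zero_obj C Z2"
  shows "iso C (zerom C Z1 Z2) Z1 Z2"
proof -
  have "cmp C (zerom C Z2 Z1) (zerom C Z1 Z2) = idm C Z1"
    using assms(1) cmp_in_Hom[OF zerom_in_Hom[of Z1 Z2] zerom_in_Hom[of Z2 Z1]] idm_in_Hom[of Z1]
    unfolding zero_obj_def by auto
  moreover have "cmp C (zerom C Z1 Z2) (zerom C Z2 Z1) = idm C Z2"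
    using assms(2) cmp_in_Hom[OF zerom_in_Hom[of Z2 Z1] zerom_in_Hom[of Z1 Z2]] idm_in_Hom[of Z2]
    unfolding zero_obj_def by auto
  ultimately show ?thesis unfolding iso_def using zerom_in_Hom by blast
qed

lemma subcat_Int: "subcat C A \<Longrightarrow> subcat C B \<Longrightarrow> subcat C (A \<inter> B)"
  unfolding subcat_def using iso_zerom_zero_obj by (elim conjE) (metis IntI IntE)

end

locale additive_category =
  fixes C :: "('o, 'm, 'x) tricat_scheme"
  assumes additive: "additive C"

sublocale additive_category \<subseteq> preadditive_category
  using additive unfolding additive_def by unfold_locales blast

locale triangulated_category =
  fixes C :: "('o, 'm, 'x) tricat_scheme"
  assumes triangulated: "triangulated C"

sublocale triangulated_category \<subseteq> additive_category
  using triangulated unfolding triangulated_def by unfold_locales blast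

context triangulated_category
begin

lemma shift: "shift_axioms C"
  using triangulated unfolding triangulated_def by blast

lemma triangles: "triangle_axioms C"
  using triangulated unfolding triangulated_def by blast

lemma dist_in_Hom:
  "dist C X Y Z f g h \<Longrightarrow> f \<in> Hom C X Y \<and> g \<in> Hom C Y Z \<and> h \<in> Hom C Z (shO C X)"
  using triangles[unfolded triangle_axioms_def, THEN conjunct1] by blast

lemma dist_rotate:
  "dist C X Y Z f g h \<longleftrightarrow> dist C Y Z (shO C X) g h (negm C (shM C f))"
  using triangles[unfolded triangle_axioms_def,
      THEN conjunct2, THEN conjunct2, THEN conjunct2, THEN conjunct2, THEN conjunct1]
  by blast

lemma dist_trivial:
  "\<exists>Z. zero_obj C Z \<and> dist C X X Z (idm C X) (zerom C X Z) (zerom C Z (shO C X))"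
  using triangles[unfolded triangle_axioms_def, THEN conjunct2, THEN conjunct2, THEN conjunct1]
  by blast

lemma dist_morphism_completion:
  "dist C X Y Z f g h \<Longrightarrow> dist C X' Y' Z' f' g' h' \<Longrightarrow>
   u \<in> Hom C X X' \<Longrightarrow> v \<in> Hom C Y Y' \<Longrightarrow> cmp C f' u = cmp C v f \<Longrightarrow>
   \<exists>w \<in> Hom C Z Z'. cmp C g' v = cmp C w g \<and> cmp C h' w = cmp C (shM C u) h"
  using triangles[unfolded triangle_axioms_def, THEN conjunct2, THEN conjunct2, THEN conjunct2,
      THEN conjunct2, THEN conjunct2, THEN conjunct1]
  by blast

lemma shM_in_Hom: "f \<in> Hom C X Y \<Longrightarrow> shM C f \<in> Hom C (shO C X) (shO C Y)"
  using shift unfolding shift_axioms_def by (meson bij_betw_apply)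

lemma shM_inj: "f \<in> Hom C X Y \<Longrightarrow> g \<in> Hom C X Y \<Longrightarrow> shM C f = shM C g \<Longrightarrow> f = g"
  using shift unfolding shift_axioms_def by (meson bij_betw_imp_inj_on inj_onD)

lemma shM_surj: "h \<in> Hom C (shO C X) (shO C Y) \<Longrightarrow> \<exists>f \<in> Hom C X Y. h = shM C f"
  using shift unfolding shift_axioms_def by (metis bij_betw_imp_surj_on imageE)

lemma shM_cmp:
  "f \<in> Hom C X Y \<Longrightarrow> g \<in> Hom C Y Z \<Longrightarrow> shM C (cmp C g f) = cmp C (shM C g) (shM C f)"
  using shift unfolding shift_axioms_def by blast

lemma shM_idm: "shM C (idm C X) = idm C (shO C X)"
  using shift unfolding shift_axioms_def by blast

lemma shM_addm:
  "f \<in> Hom C X Y \<Longrightarrow> g \<in> Hom C X Y \<Longrightarrow> shM C (addm C f g) = addm C (shM C f) (shM C g)"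
  using shift unfolding shift_axioms_def by blast

lemma shM_zerom: "shM C (zerom C X Y) = zerom C (shO C X) (shO C Y)"
proof -
  have z: "shM C (zerom C X Y) \<in> Hom C (shO C X) (shO C Y)" using shM_in_Hom zerom_in_Hom by blast
  have "addm C (shM C (zerom C X Y)) (shM C (zerom C X Y)) =
        addm C (shM C (zerom C X Y)) (zerom C (shO C X) (shO C Y))"
    using shM_addm[OF zerom_in_Hom zerom_in_Hom] zerom_addm[OF zerom_in_Hom] addm_zerom[OF z] by simp
  then show ?thesis using addm_left_cancel[OF z z zerom_in_Hom] by blast
qed

lemma shO_shO_inv: "shO C (shO_inv C A) = A"
  using shift unfolding shift_axioms_def shO_inv_def by (meson bij_is_surj surj_f_inv_f)

lemma zerom_if_shift_Hom_trivial:
  assumes "Hom C (shO C A) (shO C Y) = {zerom C (shO C A) (shO C Y)}" and t: "t \<in> Hom C A Y"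
  shows "t = zerom C A Y"
proof (rule shM_inj[OF t zerom_in_Hom])
  show "shM C t = shM C (zerom C A Y)" using shM_in_Hom[OF t] assms(1) shM_zerom by simp
qed

text \<open>Both lemmas apply TR3 against a rotated trivial triangle.\<close>

lemma dist_weak_kernel:
  assumes d: "dist C X Y Z f g h" and t: "t \<in> Hom C W Y" and gt: "cmp C g t = zerom C W Z"
  shows "\<exists>s \<in> Hom C W X. t = cmp C f s"
proof -
  obtain Z0 where "dist C W W Z0 (idm C W) (zerom C W Z0) (zerom C Z0 (shO C W))"
    using dist_trivial by blast
  then have triv: "dist C W Z0 (shO C W) (zerom C W Z0) (zerom C Z0 (shO C W))
      (negm C (shM C (idm C W)))"
    using dist_rotate by blast
  have d': "dist C Y Z (shO C X) g h (negm C (shM C f))" using d dist_rotate by blast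
  have f: "f \<in> Hom C X Y" using dist_in_Hom[OF d] by blast
  have sf: "shM C f \<in> Hom C (shO C X) (shO C Y)" and st: "shM C t \<in> Hom C (shO C W) (shO C Y)"
    using shM_in_Hom f t by auto
  have "cmp C g t = cmp C (zerom C Z0 Z) (zerom C W Z0)"
    using gt cmp_zerom_left[OF zerom_in_Hom] by simp
  then obtain w where w: "w \<in> Hom C (shO C W) (shO C X)"
     "cmp C (negm C (shM C f)) w = cmp C (shM C t) (negm C (shM C (idm C W)))"
    using dist_morphism_completion[OF triv d' t zerom_in_Hom] by metis
  have "negm C (cmp C (shM C f) w) = negm C (shM C t)"
    using w(2) cmp_negm_left[OF w(1) sf] cmp_negm_right[OF idm_in_Hom st] shM_idm
      cmp_idm_right[OF st] by simp
  then have "cmp C (shM C f) w = shM C t"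
    using negm_negm[OF cmp_in_Hom[OF w(1) sf]] negm_negm[OF st] by metis
  moreover obtain s where s: "s \<in> Hom C W X" "w = shM C s" using shM_surj[OF w(1)] by blast
  ultimately have "shM C (cmp C f s) = shM C t" using shM_cmp f by simp
  then show ?thesis using shM_inj cmp_in_Hom[OF s(1) f] t s(1) by metis
qed

lemma dist_weak_cokernel:
  assumes d: "dist C X Y Z f g h" and t: "t \<in> Hom C Y W" and tf: "cmp C t f = zerom C X W"
  shows "\<exists>s \<in> Hom C Z W. t = cmp C s g"
proof -
  obtain Z0 where Z0: "dist C W W Z0 (idm C W) (zerom C W Z0) (zerom C Z0 (shO C W))"
    using dist_trivial by blast
  define A where "A = shO_inv C Z0"
  have A: "shO C A = Z0" using shO_shO_inv A_def by simp
  have "negm C (shM C (zerom C A W)) = zerom C Z0 (shO C W)"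
    using shM_zerom A negm_zerom by simp
  then have "dist C W W (shO C A) (idm C W) (zerom C W Z0) (negm C (shM C (zerom C A W)))"
    using Z0 A by simp
  then have triv: "dist C A W W (zerom C A W) (idm C W) (zerom C W Z0)" using dist_rotate by blast
  have "cmp C (zerom C A W) (zerom C X A) = cmp C t f"
    using tf cmp_zerom_left[OF zerom_in_Hom] by simp
  then obtain w where "w \<in> Hom C Z W" "cmp C (idm C W) t = cmp C w g"
    using dist_morphism_completion[OF d triv zerom_in_Hom t] by metis
  then show ?thesis using cmp_idm_left[OF t] by auto
qed

end

locale additive_subcategory = additive_category +
  fixes W :: "'o set"
  assumes subcat_W: "subcat C W"
begin

lemma factors_through_zerom: "factors_through C W X Y (zerom C X Y)"
proof -
  obtain Z where "Z \<in> W" using subcat_W unfolding subcat_def by blast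
  then show ?thesis
    unfolding factors_through_def using zerom_in_Hom cmp_zerom_left[OF zerom_in_Hom] by metis
qed

lemma factors_through_negm:
  assumes "factors_through C W X Y f"
  shows "factors_through C W X Y (negm C f)"
proof -
  obtain Z u v where "Z \<in> W" "u \<in> Hom C X Z" "v \<in> Hom C Z Y" "f = cmp C v u"
    using assms unfolding factors_through_def by blast
  then show ?thesis unfolding factors_through_def using cmp_negm_left negm_in_Hom by metis
qed

lemma factors_through_cmp:
  assumes "factors_through C W X Y f" and k: "k \<in> Hom C Y Z"
  shows "factors_through C W X Z (cmp C k f)"
proof -
  obtain Z' u v where "Z' \<in> W" "u \<in> Hom C X Z'" "v \<in> Hom C Z' Y" "f = cmp C v u"
    using assms unfolding factors_through_def by blast
  then show ?thesis unfolding factors_through_def using cmp_assoc[OF _ _ k] cmp_in_Hom[OF _ k] by metis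
qed

text \<open>Two morphisms factoring through \<open>Z1, Z2 \<in> W\<close> sum to one factoring through the
  biproduct \<open>Z1 \<oplus> Z2 \<in> W\<close>.\<close>

lemma factors_through_addm:
  assumes f: "factors_through C W X Y f" and g: "factors_through C W X Y g"
  shows "factors_through C W X Y (addm C f g)"
proof -
  obtain Z1 u1 v1 where 1: "Z1 \<in> W" "u1 \<in> Hom C X Z1" "v1 \<in> Hom C Z1 Y" "f = cmp C v1 u1"
    using f unfolding factors_through_def by blast
  obtain Z2 u2 v2 where 2: "Z2 \<in> W" "u2 \<in> Hom C X Z2" "v2 \<in> Hom C Z2 Y" "g = cmp C v2 u2"
    using g unfolding factors_through_def by blast
  obtain B i1 i2 p1 p2 where b: "biprod C Z1 Z2 B i1 i2 p1 p2"
    using additive unfolding additive_def by blast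
  have B: "B \<in> W" using b 1(1) 2(1) subcat_W unfolding subcat_def by blast
  have bb: "i1 \<in> Hom C Z1 B" "i2 \<in> Hom C Z2 B" "p1 \<in> Hom C B Z1" "p2 \<in> Hom C B Z2"
     "cmp C p1 i1 = idm C Z1" "cmp C p2 i2 = idm C Z2"
     "cmp C p1 i2 = zerom C Z2 Z1" "cmp C p2 i1 = zerom C Z1 Z2"
    using b unfolding biprod_def by auto
  define u where "u = addm C (cmp C i1 u1) (cmp C i2 u2)"
  define v where "v = addm C (cmp C v1 p1) (cmp C v2 p2)"
  have i1u1: "cmp C i1 u1 \<in> Hom C X B" and i2u2: "cmp C i2 u2 \<in> Hom C X B"
    using cmp_in_Hom 1(2) 2(2) bb(1,2) by blast+
  have v1p1: "cmp C v1 p1 \<in> Hom C B Y" and v2p2: "cmp C v2 p2 \<in> Hom C B Y"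
    using cmp_in_Hom 1(3) 2(3) bb(3,4) by blast+
  have u: "u \<in> Hom C X B" and v: "v \<in> Hom C B Y"
    unfolding u_def v_def using addm_in_Hom i1u1 i2u2 v1p1 v2p2 by blast+
  have "cmp C v i1 = addm C (cmp C v1 (cmp C p1 i1)) (cmp C v2 (cmp C p2 i1))"
    unfolding v_def using cmp_addm_left[OF bb(1) v1p1 v2p2] cmp_assoc[OF bb(1) bb(3) 1(3)]
      cmp_assoc[OF bb(1) bb(4) 2(3)] by simp
  then have vi1: "cmp C v i1 = v1"
    using bb(5,8) cmp_idm_right[OF 1(3)] cmp_zerom_right[OF 2(3)] addm_zerom[OF 1(3)] by simp
  have "cmp C v i2 = addm C (cmp C v1 (cmp C p1 i2)) (cmp C v2 (cmp C p2 i2))"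
    unfolding v_def using cmp_addm_left[OF bb(2) v1p1 v2p2] cmp_assoc[OF bb(2) bb(3) 1(3)]
      cmp_assoc[OF bb(2) bb(4) 2(3)] by simp
  then have vi2: "cmp C v i2 = v2"
    using bb(6,7) cmp_idm_right[OF 2(3)] cmp_zerom_right[OF 1(3)] zerom_addm[OF 2(3)] by simp
  have "cmp C v u = addm C (cmp C (cmp C v i1) u1) (cmp C (cmp C v i2) u2)"
    unfolding u_def using cmp_addm_right[OF i1u1 i2u2 v] cmp_assoc[OF 1(2) bb(1) v]
      cmp_assoc[OF 2(2) bb(2) v] by simp
  then have "addm C f g = cmp C v u" using vi1 vi2 1(4) 2(4) by simp
  then show ?thesis unfolding factors_through_def using B u v by blast
qed

lemma stable_rel_equiv: "equiv (Hom C X Y) (stable_rel C W X Y)"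
proof (rule equivI)
  show "stable_rel C W X Y \<subseteq> Hom C X Y \<times> Hom C X Y" unfolding stable_rel_def by auto
  show "refl_on (Hom C X Y) (stable_rel C W X Y)"
    unfolding stable_rel_def refl_on_def using addm_negm factors_through_zerom by auto
  show "sym (stable_rel C W X Y)"
    unfolding stable_rel_def sym_def using factors_through_negm negm_diff by fastforce
  show "trans (stable_rel C W X Y)"
    unfolding stable_rel_def trans_def using factors_through_addm diff_add_diff by fastforce
qed

lemma postcomp_class_eq:
  assumes k: "k \<in> Hom C K Y" and h: "h \<in> Hom C X K"
  shows "postcomp_class C W X Y k (stable_rel C W X K `` {h}) = stable_rel C W X Y `` {cmp C k h}"
proof
  show "postcomp_class C W X Y k (stable_rel C W X K `` {h}) \<subseteq> stable_rel C W X Y `` {cmp C k h}"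
  proof
    fix y assume "y \<in> postcomp_class C W X Y k (stable_rel C W X K `` {h})"
    then obtain h' where h': "(h, h') \<in> stable_rel C W X K" "(cmp C k h', y) \<in> stable_rel C W X Y"
      unfolding postcomp_class_def by blast
    have h'_Hom: "h' \<in> Hom C X K" and "factors_through C W X K (addm C h (negm C h'))"
      using h' unfolding stable_rel_def by auto
    then have "factors_through C W X Y (addm C (cmp C k h) (negm C (cmp C k h')))"
      using factors_through_cmp[OF _ k] cmp_diff_right[OF h h'_Hom k] by metis
    then have "(cmp C k h, cmp C k h') \<in> stable_rel C W X Y"
      unfolding stable_rel_def using cmp_in_Hom[OF _ k] h h'_Hom by blast
    then show "y \<in> stable_rel C W X Y `` {cmp C k h}"
      using h'(2) stable_rel_equiv unfolding equiv_def trans_def by blast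
  qed
  show "stable_rel C W X Y `` {cmp C k h} \<subseteq> postcomp_class C W X Y k (stable_rel C W X K `` {h})"
    unfolding postcomp_class_def using equiv_class_self[OF stable_rel_equiv h] by blast
qed

lemma bij_betw_postcomp_class:
  assumes k: "k \<in> Hom C K Y"
    and surj: "\<And>h. h \<in> Hom C X Y \<Longrightarrow> \<exists>h' \<in> Hom C X K. h = cmp C k h'"
    and reflect: "\<And>d. d \<in> Hom C X K \<Longrightarrow> factors_through C W X Y (cmp C k d) \<Longrightarrow>
      factors_through C W X K d"
  shows "bij_betw (postcomp_class C W X Y k) (quot_hom C W X K) (quot_hom C W X Y)"
proof (rule bij_betw_imageI)
  show "inj_on (postcomp_class C W X Y k) (quot_hom C W X K)"
  proof (rule inj_onI)
    fix A B assume "A \<in> quot_hom C W X K" "B \<in> quot_hom C W X K"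
      and e: "postcomp_class C W X Y k A = postcomp_class C W X Y k B"
    then obtain x y where x: "A = stable_rel C W X K `` {x}" "x \<in> Hom C X K"
      and y: "B = stable_rel C W X K `` {y}" "y \<in> Hom C X K"
      unfolding quot_hom_def by (metis quotientE)
    have "stable_rel C W X Y `` {cmp C k x} = stable_rel C W X Y `` {cmp C k y}"
      using e x y postcomp_class_eq k by simp
    then have "(cmp C k x, cmp C k y) \<in> stable_rel C W X Y"
      using eq_equiv_class_iff[OF stable_rel_equiv] cmp_in_Hom k x y by blast
    then have "factors_through C W X Y (cmp C k (addm C x (negm C y)))"
      unfolding stable_rel_def using cmp_diff_right[OF x(2) y(2) k] by simp
    then have "(x, y) \<in> stable_rel C W X K"
      unfolding stable_rel_def using reflect addm_in_Hom negm_in_Hom x y by blast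
    then show "A = B" using x y eq_equiv_class_iff[OF stable_rel_equiv] by blast
  qed
  show "postcomp_class C W X Y k ` quot_hom C W X K = quot_hom C W X Y"
  proof
    show "postcomp_class C W X Y k ` quot_hom C W X K \<subseteq> quot_hom C W X Y"
      unfolding quot_hom_def
      using postcomp_class_eq[OF k] cmp_in_Hom[OF _ k] by (auto elim!: quotientE intro!: quotientI)
    show "quot_hom C W X Y \<subseteq> postcomp_class C W X Y k ` quot_hom C W X K"
    proof
      fix Q assume "Q \<in> quot_hom C W X Y"
      then obtain h where h: "Q = stable_rel C W X Y `` {h}" "h \<in> Hom C X Y"
        unfolding quot_hom_def by (rule quotientE)
      obtain h' where h': "h' \<in> Hom C X K" "h = cmp C k h'" using surj h(2) by blast
      have "Q = postcomp_class C W X Y k (stable_rel C W X K `` {h'})"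
        using postcomp_class_eq[OF k h'(1)] h h' by simp
      moreover have "stable_rel C W X K `` {h'} \<in> quot_hom C W X K"
        unfolding quot_hom_def using h'(1) by (rule quotientI)
      ultimately show "Q \<in> postcomp_class C W X Y k ` quot_hom C W X K" by blast
    qed
  qed
qed

end

context triangulated_category
begin

lemma lift_along_cone:
  assumes tr_X: "dist C A X B f0 g0 h0"
    and a: "a \<in> Hom C Y T'" and b: "b \<in> Hom C T' (shO C V')"
    and tr_k: "dist C V' K Y i k (cmp C b a)"
    and vanish_A: "ext1_vanish C {shO C A} {T'}" and vanish_B: "ext1_vanish C {B} {V'}"
    and h: "h \<in> Hom C X Y"
  shows "\<exists>h' \<in> Hom C X K. h = cmp C k h'"
proof -
  have f0: "f0 \<in> Hom C A X" and g0: "g0 \<in> Hom C X B" using dist_in_Hom[OF tr_X] by auto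
  have ah: "cmp C a h \<in> Hom C X T'" using cmp_in_Hom[OF h a] .
  have "cmp C (cmp C a h) f0 = zerom C A T'"
    using zerom_if_shift_Hom_trivial[OF _ cmp_in_Hom[OF f0 ah]] vanish_A
    unfolding ext1_vanish_def by blast
  then obtain s where s: "s \<in> Hom C B T'" "cmp C a h = cmp C s g0"
    using dist_weak_cokernel[OF tr_X ah] by blast
  have bs: "cmp C b s = zerom C B (shO C V')"
    using cmp_in_Hom[OF s(1) b] vanish_B unfolding ext1_vanish_def by blast
  have "cmp C (cmp C b a) h = cmp C (cmp C b s) g0"
    using cmp_assoc[OF h a b] s cmp_assoc[OF g0 s(1) b] by simp
  also have "\<dots> = zerom C X (shO C V')" using bs cmp_zerom_left[OF g0] by simp
  finally show ?thesis
    using dist_weak_kernel[OF dist_rotate[THEN iffD1, OF tr_k] h] by blast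
qed

lemma factors_through_reflect_cone:
  assumes W: "subcat C W"
    and tr_X: "dist C A X B f0 g0 h0" and B: "B \<in> W"
    and tr_k: "dist C V' K Y i k e"
    and vanish_A: "ext1_vanish C {shO C A} {V'}" and vanish_W: "ext1_vanish C W {V'}"
    and d: "d \<in> Hom C X K" and kd: "factors_through C W X Y (cmp C k d)"
  shows "factors_through C W X K d"
proof -
  interpret additive_subcategory C W using W by unfold_locales
  have f0: "f0 \<in> Hom C A X" and g0: "g0 \<in> Hom C X B" using dist_in_Hom[OF tr_X] by auto
  have i: "i \<in> Hom C V' K" and k: "k \<in> Hom C K Y" and e: "e \<in> Hom C Y (shO C V')"
    using dist_in_Hom[OF tr_k] by auto
  obtain W1 u v where W1: "W1 \<in> W" "u \<in> Hom C X W1" "v \<in> Hom C W1 Y" "cmp C k d = cmp C v u"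
    using kd unfolding factors_through_def by blast
  have "cmp C e v = zerom C W1 (shO C V')"
    using cmp_in_Hom[OF W1(3) e] vanish_W W1(1) unfolding ext1_vanish_def by blast
  then obtain v' where v': "v' \<in> Hom C W1 K" "v = cmp C k v'"
    using dist_weak_kernel[OF dist_rotate[THEN iffD1, OF tr_k] W1(3)] by blast
  have v'u: "cmp C v' u \<in> Hom C X K" using cmp_in_Hom[OF W1(2) v'(1)] .
  have fv'u: "factors_through C W X K (cmp C v' u)"
    unfolding factors_through_def using W1 v' by blast
  define r where "r = addm C d (negm C (cmp C v' u))"
  have r: "r \<in> Hom C X K" unfolding r_def using addm_in_Hom[OF d negm_in_Hom[OF v'u]] .
  have "cmp C k (cmp C v' u) = cmp C k d" using W1(4) v' cmp_assoc[OF W1(2) v'(1) k] by simp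
  then have "cmp C k r = zerom C X Y"
    unfolding r_def using cmp_diff_right[OF d v'u k] addm_negm[OF cmp_in_Hom[OF d k]] by simp
  then obtain t where t: "t \<in> Hom C X V'" "r = cmp C i t"
    using dist_weak_kernel[OF tr_k r] by blast
  have "cmp C t f0 = zerom C A V'"
    using zerom_if_shift_Hom_trivial[OF _ cmp_in_Hom[OF f0 t(1)]] vanish_A
    unfolding ext1_vanish_def by blast
  then obtain t' where t': "t' \<in> Hom C B V'" "t = cmp C t' g0"
    using dist_weak_cokernel[OF tr_X t(1)] by blast
  have "r = cmp C (cmp C i t') g0" using t t' cmp_assoc[OF g0 t'(1) i] by simp
  then have "factors_through C W X K r"
    unfolding factors_through_def using B g0 cmp_in_Hom[OF t'(1) i] by blast
  moreover have "d = addm C r (cmp C v' u)" unfolding r_def using diff_addm_cancel[OF d v'u] by simp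
  ultimately show ?thesis using factors_through_addm fv'u by simp
qed

end

theorem proposition3p5:
  fixes C :: "('o, 'm) tricat"
    and S T U V :: "'o set"
    and c Sob Tob Uob Vob K X :: 'o
    and f a g p b q i k :: 'm
  assumes tri: "triangulated C"
    and twin: "twin_cotorsion_pair C S T U V"
    and Sob: "Sob \<in> S" and Tob: "Tob \<in> T"
    and tr1: "dist C (shO_inv C Sob) c Tob f a g"
    and Uob: "Uob \<in> U" and Vob: "Vob \<in> V"
    and tr2: "dist C Uob Tob (shO C Vob) p b q"
    and tr3: "dist C Vob K c i k (cmp C b a)"
    and X: "X \<in> Cminus C S T U"
  shows "bij_betw (postcomp_class C (T \<inter> U) X c k)
                  (quot_hom C (T \<inter> U) X K) (quot_hom C (T \<inter> U) X c)"
proof -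
  interpret triangulated_category C using tri by unfold_locales
  have T: "subcat C T" and U: "subcat C U" and ST: "ext1_vanish C S T"
    and UV: "ext1_vanish C U V" and SV: "ext1_vanish C S V"
    using twin unfolding twin_cotorsion_pair_def cotorsion_pair_def by simp_all
  have W: "subcat C (T \<inter> U)" using subcat_Int[OF T U] .
  interpret additive_subcategory C "T \<inter> U" using W by unfold_locales
  obtain A B f0 g0 h0 where A: "A \<in> shO_inv C ` S" and B: "B \<in> T \<inter> U"
    and tr_X: "dist C A X B f0 g0 h0"
    using X unfolding Cminus_def star_def by blast
  have shA: "shO C A \<in> S" using A shO_shO_inv by auto
  have a: "a \<in> Hom C c Tob" and b: "b \<in> Hom C Tob (shO C Vob)" and k: "k \<in> Hom C K c"
    using dist_in_Hom[OF tr1] dist_in_Hom[OF tr2] dist_in_Hom[OF tr3] by auto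
  have vanish_A_T: "ext1_vanish C {shO C A} {Tob}"
    using shA Tob by (intro ext1_vanish_mono[OF ST]) auto
  have vanish_A_V: "ext1_vanish C {shO C A} {Vob}"
    using shA Vob by (intro ext1_vanish_mono[OF SV]) auto
  have vanish_B: "ext1_vanish C {B} {Vob}"
    using B Vob by (intro ext1_vanish_mono[OF UV]) auto
  have vanish_W: "ext1_vanish C (T \<inter> U) {Vob}"
    using Vob by (intro ext1_vanish_mono[OF UV]) auto
  show ?thesis
  proof (rule bij_betw_postcomp_class[OF k])
    show "\<exists>h' \<in> Hom C X K. h = cmp C k h'" if "h \<in> Hom C X c" for h
      using lift_along_cone[OF tr_X a b tr3 vanish_A_T vanish_B that] .
    show "factors_through C (T \<inter> U) X K d"
      if "d \<in> Hom C X K" "factors_through C (T \<inter> U) X c (cmp C k d)" for d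
      using factors_through_reflect_cone[OF W tr_X B tr3 vanish_A_V vanish_W that] .
  qed
qed

end
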